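(* Let $X,Y$ be infinite dimensional Banach lattices such that (a) $X,Y$ are relatively $s$-decomposable for some $1\le s\le\infty$; (b) $\ell_p$ is finitely lattice representable in $Y_U$; (c) $\ell_q$ is finitely lattice representable in $X_L$. Then $\frac1p\le\frac1q+\frac1s$.
   Context: Banach lattices are real; disjoint means $|x|\wedge|y|=0$. $X,Y$ are relatively $s$-decomposable if there is $D$ with $\|\sum_{i=1}^n y_i\|_Y\le D(\sum_i(\|y_i\|_Y/\|x_i\|_X)^s)^{1/s}\|\sum_{i=1}^n x_i\|_X$ for all $n$ and all pairwise disjoint nonzero $x_i\in X$, pairwise disjoint nonzero $y_i\in Y$ (max for $s=\infty$). $\ell_r$ is finitely lattice representable in a Banach lattice $Z$ if for every $n$ and $\varepsilon>0$ there are pairwise disjoint $z_1,\dots,z_n\in Z$ with $\|a\|_{\ell_r^n}\le\|\sum a_iz_i\|_Z\le(1+\varepsilon)\|a\|_{\ell_r^n}$ for all $a\in\mathbb R^n$. $\mathfrak B_n(X)$ is the set of $n$-tuples of pairwise disjoint norm-one elements. For $a\in\mathbb R^n$: $\|a\|_{Y_U(n)}:=\sup\{\|\sum a_iy_i\|_Y:(y_i)\in\mathfrak B_n(Y)\}$; $\Phi_n(a):=\inf\{\|\sum a_ix_i\|_X:(x_i)\in\mathfrak B_n(X)\}$; $\|a\|_{X_L(n)}:=\inf\{\sum_{k\in F}\Phi_n(a^k):F\text{ finite}, a=\sum_{k\in F}a^k\}$. $Y_U$, $X_L$ are the Banach lattices (coordinate-wise order) of real sequences with $\|a\|_{Y_U}:=\sup_n\|(a_i)_{i\le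 n}\|_{Y_U(n)}<\infty$, resp. $\|a\|_{X_L}:=\sup_n\|(a_i)_{i\le n}\|_{X_L(n)}<\infty$. *)

theory Defs
  imports "HOL-Analysis.Analysis"
begin

text \<open>Banach lattices are modelled as types of sort
  banach + ordered_real_vector + lattice (an ordered real Banach space whose order is a
  lattice, i.e. a Riesz space), together with the lattice-norm axiom.\<close>

definition labs :: "'a::{lattice, uminus} \<Rightarrow> 'a" where
  "labs x = sup x (- x)"

definition banach_lattice :: "'a::{banach, ordered_real_vector, lattice} itself \<Rightarrow> bool" where
  "banach_lattice _ \<longleftrightarrow> (\<forall>x y::'a. labs x \<le> labs y \<longrightarrow> norm x \<le> norm y)"

definition infinite_dimensional :: "'a::real_vector itself \<Rightarrow> bool" where
  "infinite_dimensional _ \<longleftrightarrow> \<not> (\<exists>S::'a set. finite S \<and> span S = UNIV)"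

definition ldisj :: "'a::{lattice, uminus, zero} \<Rightarrow> 'a \<Rightarrow> bool" where
  "ldisj x y \<longleftrightarrow> inf (labs x) (labs y) = 0"

definition lnorm :: "ereal \<Rightarrow> nat \<Rightarrow> (nat \<Rightarrow> real) \<Rightarrow> real" where
  "lnorm r n a = (if r = \<infinity> then Max (insert 0 ((\<lambda>i. \<bar>a i\<bar>) ` {..<n}))
                  else (\<Sum>i<n. \<bar>a i\<bar> powr real_of_ereal r) powr (1 / real_of_ereal r))"

definition rel_decomposable ::
  "'a::{banach, ordered_real_vector, lattice} itself \<Rightarrow> 'b::{banach, ordered_real_vector, lattice} itself
    \<Rightarrow> ereal \<Rightarrow> bool" where
  "rel_decomposable _ _ s \<longleftrightarrow> (\<exists>D::real. \<forall>n. \<forall>x::nat \<Rightarrow> 'a. \<forall>y::nat \<Rightarrow> 'b.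
     (\<forall>i<n. x i \<noteq> 0) \<and> (\<forall>i<n. y i \<noteq> 0) \<and>
     (\<forall>i<n. \<forall>j<n. i \<noteq> j \<longrightarrow> ldisj (x i) (x j)) \<and>
     (\<forall>i<n. \<forall>j<n. i \<noteq> j \<longrightarrow> ldisj (y i) (y j)) \<longrightarrow>
     norm (\<Sum>i<n. y i) \<le> D * lnorm s n (\<lambda>i. norm (y i) / norm (x i)) * norm (\<Sum>i<n. x i))"

definition Bn :: "'a::{banach, ordered_real_vector, lattice} itself \<Rightarrow> nat \<Rightarrow> (nat \<Rightarrow> 'a) set" where
  "Bn _ n = {x. (\<forall>i<n. norm (x i) = 1) \<and> (\<forall>i<n. \<forall>j<n. i \<noteq> j \<longrightarrow> ldisj (x i) (x j))}"

definition YUn :: "'b::{banach, ordered_real_vector, lattice} itself \<Rightarrow> nat \<Rightarrow> (nat \<Rightarrow> real) \<Rightarrow> ereal" where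
  "YUn T n a = (SUP y \<in> Bn T n. ereal (norm (\<Sum>i<n. a i *\<^sub>R y i)))"

definition Phin :: "'a::{banach, ordered_real_vector, lattice} itself \<Rightarrow> nat \<Rightarrow> (nat \<Rightarrow> real) \<Rightarrow> ereal" where
  "Phin T n a = (INF x \<in> Bn T n. ereal (norm (\<Sum>i<n. a i *\<^sub>R x i)))"

definition XLn :: "'a::{banach, ordered_real_vector, lattice} itself \<Rightarrow> nat \<Rightarrow> (nat \<Rightarrow> real) \<Rightarrow> ereal" where
  "XLn T n a = (INF (F, A) \<in> {(F, A). finite F \<and> (\<forall>i<n. a i = (\<Sum>k\<in>F. A k i))}.
                  (\<Sum>k\<in>(F::nat set). Phin T n (A k)))"

text \<open>Norms of the sequence lattices Y_U and X_L (value infinity means "not in the space").\<close>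
definition YU_norm :: "'b::{banach, ordered_real_vector, lattice} itself \<Rightarrow> (nat \<Rightarrow> real) \<Rightarrow> ereal" where
  "YU_norm T a = (SUP n. YUn T n a)"

definition XL_norm :: "'a::{banach, ordered_real_vector, lattice} itself \<Rightarrow> (nat \<Rightarrow> real) \<Rightarrow> ereal" where
  "XL_norm T a = (SUP n. XLn T n a)"

text \<open>l_r is finitely lattice representable in the sequence lattice with (extended) norm N,
  whose elements are the sequences of finite norm, ordered coordinatewise.\<close>
definition fin_lattice_repr :: "ereal \<Rightarrow> ((nat \<Rightarrow> real) \<Rightarrow> ereal) \<Rightarrow> bool" where
  "fin_lattice_repr r N \<longleftrightarrow> (\<forall>n. \<forall>\<epsilon>>0. \<exists>z::nat \<Rightarrow> nat \<Rightarrow> real.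
     (\<forall>i<n. N (z i) < \<infinity>) \<and>
     (\<forall>i<n. \<forall>j<n. i \<noteq> j \<longrightarrow> (\<forall>k. min \<bar>z i k\<bar> \<bar>z j k\<bar> = 0)) \<and>
     (\<forall>a. ereal (lnorm r n a) \<le> N (\<lambda>k. \<Sum>i<n. a i * z i k) \<and>
          N (\<lambda>k. \<Sum>i<n. a i * z i k) \<le> ereal ((1 + \<epsilon>) * lnorm r n a)))"

end

theory Submission
  imports Defs "HOL-Library.Lattice_Algebras"
begin

text \<open>Fix \<open>m\<close>. Representability of \<open>\<ell>\<^sub>p\<close> in \<open>Y\<^sub>U\<close> yields \<open>m\<close> pairwise disjoint
  elements \<open>v\<^sub>i\<close> of \<open>Y\<close> of norm at most 2 with \<open>\<parallel>\<Sum> v\<^sub>i\<parallel> \<ge> m\<^bsup>1/p\<^esup> - 1/2\<close>.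
  Representability of \<open>\<ell>\<^sub>q\<close> in \<open>X\<^sub>L\<close>, together with almost optimal decompositions in the
  definition of the norm of \<open>X\<^sub>L\<close>, yields finitely many families \<open>(x\<^sup>j\<^sub>i)\<^sub>i\<close> of pairwise
  disjoint elements of \<open>X\<close> with \<open>\<Sum>\<^sub>j \<parallel>x\<^sup>j\<^sub>i\<parallel> \<ge> 1/2\<close> for every \<open>i\<close> and
  \<open>\<Sum>\<^sub>j \<parallel>\<Sum>\<^sub>i x\<^sup>j\<^sub>i\<parallel> \<le> 2 m\<^bsup>1/q\<^esup> + 1\<close>. Splitting each \<open>v\<^sub>i\<close> in proportion to the
  numbers \<open>\<parallel>x\<^sup>j\<^sub>i\<parallel>\<close> and applying relative \<open>s\<close>-decomposability to each family \<open>j\<close> gives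
  \<open>\<parallel>\<Sum> v\<^sub>i\<parallel> \<le> 12 D m\<^bsup>1/q + 1/s\<^esup>\<close>. As \<open>m\<close> is arbitrary, \<open>1/p \<le> 1/q + 1/s\<close>.\<close>

section \<open>Disjointness in lattice-ordered vector spaces\<close>

interpretation riesz: lattice_ab_group_add_abs labs "(+)" "0::'a::{ordered_ab_group_add,lattice}"
    "(-)" uminus "(\<le>)" "(<)" inf sup
  by unfold_locales (simp add: labs_def)

lemma scaleR_sup_nonneg:
  fixes x y :: "'a::{ordered_real_vector,lattice}"
  assumes "0 \<le> c"
  shows "c *\<^sub>R sup x y = sup (c *\<^sub>R x) (c *\<^sub>R y)"
proof (cases "c = 0")
  case False
  with assms have c: "0 < c" by simp
  show ?thesis
  proof (rule antisym)
    have "sup x y \<le> sup (c *\<^sub>R x) (c *\<^sub>R y) /\<^sub>R c"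
      using c by (simp add: pos_le_divideR_eq)
    then show "c *\<^sub>R sup x y \<le> sup (c *\<^sub>R x) (c *\<^sub>R y)"
      using pos_le_divideR_eq[OF c] by blast
  qed (use assms in \<open>simp add: scaleR_left_mono\<close>)
qed simp

lemma scaleR_inf_nonneg:
  fixes x y :: "'a::{ordered_real_vector,lattice}"
  assumes "0 \<le> c"
  shows "c *\<^sub>R inf x y = inf (c *\<^sub>R x) (c *\<^sub>R y)"
proof -
  have "c *\<^sub>R inf x y = - (c *\<^sub>R sup (- x) (- y))"
    by (simp only: riesz.inf_eq_neg_sup scaleR_minus_right)
  also have "\<dots> = - sup (c *\<^sub>R - x) (c *\<^sub>R - y)"
    by (simp only: scaleR_sup_nonneg[OF assms])
  also have "\<dots> = inf (c *\<^sub>R x) (c *\<^sub>R y)"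
    by (simp only: scaleR_minus_right riesz.neg_sup_eq_inf minus_minus)
  finally show ?thesis .
qed

lemma labs_scaleR: "labs (c *\<^sub>R x) = \<bar>c\<bar> *\<^sub>R labs (x::'a::{ordered_real_vector,lattice})"
proof (cases "0 \<le> c")
  case True
  then show ?thesis by (simp add: labs_def scaleR_sup_nonneg)
next
  case False
  have "labs (c *\<^sub>R x) = labs ((- c) *\<^sub>R (- x))"
    by simp
  also have "\<dots> = (- c) *\<^sub>R labs (- x)"
    using False by (simp only: labs_def scaleR_sup_nonneg) simp
  finally show ?thesis
    using False by simp
qed

lemma inf_add_le_nonneg:
  fixes a b c :: "'a::{ordered_real_vector,lattice}"
  assumes "0 \<le> a" "0 \<le> b" "0 \<le> c"
  shows "inf a (b + c) \<le> inf a b + inf a c"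
proof -
  let ?t = "inf a (b + c)"
  have "?t - c \<le> b"
    by (simp add: diff_le_eq)
  moreover have "?t - c \<le> a"
    using assms(3) by (meson diff_le_eq inf_le1 le_add_same_cancel1 order_trans)
  ultimately have "?t - c \<le> inf a b"
    by simp
  then have "?t \<le> inf a b + c"
    by (metis diff_le_eq)
  then have "?t - inf a b \<le> c"
    by (metis add.commute diff_le_eq)
  moreover have "?t - inf a b \<le> a"
    using assms(1,2) by (meson diff_le_eq inf_le1 le_add_same_cancel1 le_inf_iff order_trans)
  ultimately have "?t - inf a b \<le> inf a c"
    by simp
  then show ?thesis
    by (metis add.commute diff_le_eq)
qed

lemma ldisj_commute: "ldisj x y \<longleftrightarrow> ldisj y x"
  by (simp add: ldisj_def inf_commute)

lemma ldisj_zero_right [simp]: "ldisj (x::'a::{ordered_real_vector,lattice}) 0"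
  unfolding ldisj_def by (simp add: inf_absorb2)

lemma ldisj_iff_le_zero: "ldisj x y \<longleftrightarrow> inf (labs x) (labs y) \<le> (0::'a::{ordered_real_vector,lattice})"
  unfolding ldisj_def by (simp add: eq_iff)

lemma ldisj_add_right:
  fixes x y z :: "'a::{ordered_real_vector,lattice}"
  assumes "ldisj x y" "ldisj x z"
  shows "ldisj x (y + z)"
proof -
  have "inf (labs x) (labs (y + z)) \<le> inf (labs x) (labs y + labs z)"
    by (intro inf_mono riesz.abs_triangle_ineq) simp
  also have "\<dots> \<le> inf (labs x) (labs y) + inf (labs x) (labs z)"
    by (rule inf_add_le_nonneg) simp_all
  also have "\<dots> = 0"
    using assms by (simp add: ldisj_def)
  finally show ?thesis
    by (simp add: ldisj_iff_le_zero)
qed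

lemma ldisj_scaleR:
  fixes x y :: "'a::{ordered_real_vector,lattice}"
  assumes "ldisj x y"
  shows "ldisj (c *\<^sub>R x) (d *\<^sub>R y)"
proof -
  let ?M = "max \<bar>c\<bar> \<bar>d\<bar>"
  have "inf (labs (c *\<^sub>R x)) (labs (d *\<^sub>R y)) \<le> inf (?M *\<^sub>R labs x) (?M *\<^sub>R labs y)"
    unfolding labs_scaleR by (intro inf_mono scaleR_right_mono) simp_all
  also have "\<dots> = ?M *\<^sub>R inf (labs x) (labs y)"
    by (simp add: scaleR_inf_nonneg)
  also have "\<dots> = 0"
    using assms by (simp add: ldisj_def)
  finally show ?thesis
    by (simp add: ldisj_iff_le_zero)
qed

lemma labs_add_ldisj:
  fixes x y :: "'a::{ordered_real_vector,lattice}"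
  assumes "ldisj x y"
  shows "labs (x + y) = labs x + labs y"
proof (rule antisym)
  let ?a = "labs x" and ?b = "labs y"
  have sup_ab: "?a + ?b = sup ?a ?b"
    using riesz.add_eq_inf_sup[of ?a ?b] assms by (simp add: ldisj_def)
  have "sup (?a - ?b) (?b - ?a) + (?a + ?b) = sup (?a + ?a) (?b + ?b)"
    unfolding riesz.add_sup_distrib_right by (simp add: algebra_simps)
  also have "\<dots> = 2 *\<^sub>R sup ?a ?b"
    using scaleR_sup_nonneg[of 2 ?a ?b] by (simp only: scaleR_2 zero_le_numeral simp_thms)
  also have "\<dots> = (?a + ?b) + (?a + ?b)"
    by (simp only: sup_ab scaleR_2)
  finally have "?a + ?b = sup (?a - ?b) (?b - ?a)"
    by (simp only: add_right_cancel)
  also have "\<dots> \<le> labs (x + y)"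
  proof (rule sup_least)
    have "?a \<le> labs (x + y) + ?b"
      using riesz.abs_triangle_ineq[of "x + y" "- y"] by simp
    then show "?a - ?b \<le> labs (x + y)"
      by (simp only: diff_le_eq)
    have "?b \<le> labs (x + y) + ?a"
      using riesz.abs_triangle_ineq[of "x + y" "- x"] by (simp add: add.assoc)
    then show "?b - ?a \<le> labs (x + y)"
      by (simp only: diff_le_eq)
  qed
  finally show "?a + ?b \<le> labs (x + y)" .
qed (rule riesz.abs_triangle_ineq)

lemma ldisj_sum_right:
  fixes e :: "'i \<Rightarrow> 'a::{ordered_real_vector,lattice}"
  assumes "finite K" "\<And>k. k \<in> K \<Longrightarrow> ldisj x (e k)"
  shows "ldisj x (\<Sum>k\<in>K. e k)"
  using assms by (induction K rule: finite_induct) (simp_all add: ldisj_add_right)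

lemma ldisj_sum_sum:
  fixes e :: "'i \<Rightarrow> 'a::{ordered_real_vector,lattice}"
  assumes "pairwise (\<lambda>k l. ldisj (e k) (e l)) K" "S \<subseteq> K" "T \<subseteq> K" "S \<inter> T = {}"
    "finite S" "finite T"
  shows "ldisj (\<Sum>k\<in>S. e k) (\<Sum>l\<in>T. e l)"
proof -
  have "ldisj (e l) (e k)" if "l \<in> T" "k \<in> S" for l k
  proof -
    have "l \<in> K" "k \<in> K" "l \<noteq> k"
      using that assms(2-4) by auto
    then show ?thesis
      using assms(1) by (simp add: pairwise_def)
  qed
  then have "ldisj (\<Sum>k\<in>S. e k) (e l)" if "l \<in> T" for l
    using that assms(5) ldisj_commute ldisj_sum_right by metis
  then show ?thesis
    using assms(6) by (rule ldisj_sum_right[rotated])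
qed

lemma labs_sum_pairwise_ldisj:
  fixes e :: "'i \<Rightarrow> 'a::{ordered_real_vector,lattice}"
  assumes "finite K" "pairwise (\<lambda>k l. ldisj (e k) (e l)) K"
  shows "labs (\<Sum>k\<in>K. e k) = (\<Sum>k\<in>K. labs (e k))"
  using assms
proof (induction K rule: finite_induct)
  case (insert k K)
  then have "ldisj (e k) (\<Sum>l\<in>K. e l)"
    by (intro ldisj_sum_right) (auto simp: pairwise_def)
  with insert show ?case
    by (simp add: labs_add_ldisj pairwise_insert)
qed simp

lemma norm_sum_le_subset:
  fixes e :: "'i \<Rightarrow> 'a::{banach,ordered_real_vector,lattice}"
  assumes "banach_lattice (T::'a itself)" "finite K" "I \<subseteq> K"
    "pairwise (\<lambda>k l. ldisj (e k) (e l)) K"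
  shows "norm (\<Sum>i\<in>I. e i) \<le> norm (\<Sum>k\<in>K. e k)"
proof -
  have "finite I"
    using assms(2,3) by (rule finite_subset[rotated])
  then have "labs (\<Sum>i\<in>I. e i) = (\<Sum>i\<in>I. labs (e i))"
    using assms(3,4) by (intro labs_sum_pairwise_ldisj) (auto intro: pairwise_subset)
  also have "\<dots> \<le> (\<Sum>k\<in>K. labs (e k))"
    using assms(2,3) by (intro sum_mono2) simp_all
  also have "\<dots> = labs (\<Sum>k\<in>K. e k)"
    using assms(2,4) by (rule labs_sum_pairwise_ldisj[symmetric])
  finally show ?thesis
    using assms(1) unfolding banach_lattice_def by blast
qed

lemma Bn_pairwise_ldisj:
  assumes "x \<in> Bn T N"
  shows "pairwise (\<lambda>k l. ldisj (a k *\<^sub>R x k) (a l *\<^sub>R x l)) {..<N}"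
  using assms by (auto simp: Bn_def pairwise_def intro: ldisj_scaleR)

lemma sum_disjoint_support:
  fixes z :: "nat \<Rightarrow> nat \<Rightarrow> real"
  assumes "\<And>i j k. i < m \<Longrightarrow> j < m \<Longrightarrow> i \<noteq> j \<Longrightarrow> z i k = 0 \<or> z j k = 0"
    "i < m" "z i k \<noteq> 0"
  shows "(\<Sum>j<m. z j k) = z i k"
  using assms by (subst sum.remove[of _ i]) (auto intro: sum.neutral)

section \<open>The norms of \<open>\<ell>\<^sub>r\<^sup>n\<close>\<close>

lemma one_le_ereal_cases:
  assumes "1 \<le> r"
  obtains "r = \<infinity>" "1 / r = 0"
  | t where "r = ereal t" "1 \<le> t" "1 / r = ereal (1 / t)"
  using assms by (cases r) (auto simp: divide_ereal_def inverse_eq_divide)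

lemma ereal_inverse_real:
  assumes "1 \<le> r"
  shows "1 / r = ereal (real_of_ereal (1 / r))" "0 \<le> real_of_ereal (1 / r)"
  using assms by (cases rule: one_le_ereal_cases; simp)+

lemma lnorm_nonneg: "0 \<le> lnorm r n a"
  by (auto simp: lnorm_def intro: Max_ge)

lemma lnorm_const_one:
  assumes "1 \<le> r" "1 \<le> n"
  shows "lnorm r n (\<lambda>_. 1) = real n powr real_of_ereal (1 / r)"
  using assms(1)
proof (cases rule: one_le_ereal_cases)
  case 1
  have "(\<lambda>i. \<bar>1::real\<bar>) ` {..<n} = {1}"
    using assms(2) by (auto simp: image_constant_conv lessThan_empty_iff)
  then show ?thesis
    using 1 assms(2) by (simp add: lnorm_def)
qed (use assms in \<open>simp add: lnorm_def\<close>)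

lemma lnorm_unit_vector:
  assumes "1 \<le> r" "i < n"
  shows "lnorm r n (\<lambda>j. if j = i then 1 else 0) = 1"
  using assms(1)
proof (cases rule: one_le_ereal_cases)
  case 1
  have "insert 0 ((\<lambda>j. \<bar>if j = i then 1 else 0::real\<bar>) ` {..<n}) = {0, 1}"
    using assms(2) by (auto simp: image_iff)
  then show ?thesis
    using 1 by (simp add: lnorm_def)
next
  case (2 t)
  have "(\<Sum>j<n. \<bar>if j = i then 1 else 0::real\<bar> powr t) = (\<Sum>j<n. if j = i then 1 else 0)"
    using 2 by (intro sum.cong) auto
  then show ?thesis
    using 2 assms(2) by (simp add: lnorm_def)
qed

lemma lnorm_le_card_powr:
  assumes "1 \<le> r" "0 \<le> R" "\<And>i. i < n \<Longrightarrow> \<bar>a i\<bar> \<le> R"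
  shows "lnorm r n a \<le> real n powr real_of_ereal (1 / r) * R"
  using assms(1)
proof (cases rule: one_le_ereal_cases)
  case 1
  then show ?thesis
    using assms(2,3) by (cases "n = 0") (auto simp: lnorm_def)
next
  case (2 t)
  have "(\<Sum>i<n. \<bar>a i\<bar> powr t) \<le> real n * R powr t"
    using sum_mono[of "{..<n}" "\<lambda>i. \<bar>a i\<bar> powr t" "\<lambda>_. R powr t"] assms(3) 2
    by (simp add: powr_mono2)
  then have "(\<Sum>i<n. \<bar>a i\<bar> powr t) powr (1 / t) \<le> (real n * R powr t) powr (1 / t)"
    using 2 by (intro powr_mono2) (auto intro: sum_nonneg)
  also have "\<dots> = real n powr (1 / t) * R"
    using 2 assms(2) by (simp add: powr_mult powr_powr)
  finally show ?thesis
    using 2 by (simp add: lnorm_def)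
qed

section \<open>The sequence lattices \<open>Y\<^sub>U\<close> and \<open>X\<^sub>L\<close>\<close>

lemma fin_lattice_repr_obtain:
  assumes "fin_lattice_repr r N" "1 \<le> r" "1 \<le> m"
  obtains z :: "nat \<Rightarrow> nat \<Rightarrow> real" where
    "\<And>i j k. i < m \<Longrightarrow> j < m \<Longrightarrow> i \<noteq> j \<Longrightarrow> z i k = 0 \<or> z j k = 0"
    "\<And>i. i < m \<Longrightarrow> 1 \<le> N (z i) \<and> N (z i) \<le> 2"
    "ereal (real m powr real_of_ereal (1 / r)) \<le> N (\<lambda>k. \<Sum>i<m. z i k)"
    "N (\<lambda>k. \<Sum>i<m. z i k) \<le> ereal (2 * real m powr real_of_ereal (1 / r))"
proof -
  obtain z :: "nat \<Rightarrow> nat \<Rightarrow> real" where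
    disj: "\<forall>i<m. \<forall>j<m. i \<noteq> j \<longrightarrow> (\<forall>k. min \<bar>z i k\<bar> \<bar>z j k\<bar> = 0)" and
    bounds: "\<And>a. ereal (lnorm r m a) \<le> N (\<lambda>k. \<Sum>i<m. a i * z i k) \<and>
                 N (\<lambda>k. \<Sum>i<m. a i * z i k) \<le> ereal ((1 + 1) * lnorm r m a)"
    using assms(1)[unfolded fin_lattice_repr_def, rule_format, of 1 m] by auto
  have unit: "(\<lambda>k. \<Sum>j<m. (if j = i then 1 else 0) * z j k) = z i" if "i < m" for i
  proof
    fix k
    have "(\<Sum>j<m. (if j = i then 1 else 0) * z j k) = (\<Sum>j<m. if j = i then z i k else 0)"
      by (intro sum.cong) auto
    then show "(\<Sum>j<m. (if j = i then 1 else 0) * z j k) = z i k"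
      using that by simp
  qed
  show ?thesis
  proof
    show "z i k = 0 \<or> z j k = 0" if "i < m" "j < m" "i \<noteq> j" for i j k
      using disj that by (auto simp: min_def split: if_splits)
    show "1 \<le> N (z i) \<and> N (z i) \<le> 2" if "i < m" for i
      using bounds[of "\<lambda>j. if j = i then 1 else 0"]
      by (simp add: unit[OF that] lnorm_unit_vector[OF assms(2) that] one_ereal_def)
  qed (use bounds[of "\<lambda>_. 1"] in \<open>simp_all add: lnorm_const_one[OF assms(2,3)]\<close>)
qed

lemma YU_norm_ge_norm_sum:
  assumes "y \<in> Bn T N"
  shows "ereal (norm (\<Sum>k<N. a k *\<^sub>R y k)) \<le> YU_norm T a"
  unfolding YU_norm_def YUn_def using assms by (auto intro: SUP_upper2)

lemma YU_norm_greater_obtain: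
  assumes "ereal c < YU_norm T a"
  obtains N y where "y \<in> Bn T N" "c < norm (\<Sum>k<N. a k *\<^sub>R y k)"
  using assms unfolding YU_norm_def YUn_def by (auto simp: less_SUP_iff)

lemma Phin_mono:
  assumes "banach_lattice T" "n \<le> n'"
  shows "Phin T n a \<le> Phin T n' a"
  unfolding Phin_def
proof (rule INF_mono)
  fix x assume x: "x \<in> Bn T n'"
  then have "x \<in> Bn T n"
    using assms(2) by (auto simp: Bn_def)
  moreover have "norm (\<Sum>k<n. a k *\<^sub>R x k) \<le> norm (\<Sum>k<n'. a k *\<^sub>R x k)"
    using assms by (intro norm_sum_le_subset[OF assms(1)] Bn_pairwise_ldisj[OF x]) auto
  ultimately show "\<exists>x'\<in>Bn T n.
      ereal (norm (\<Sum>k<n. a k *\<^sub>R x' k)) \<le> ereal (norm (\<Sum>k<n'. a k *\<^sub>R x k))"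
    by auto
qed

lemma XLn_mono:
  assumes "banach_lattice T" "n \<le> n'"
  shows "XLn T n a \<le> XLn T n' a"
  unfolding XLn_def
proof (rule INF_mono, clarify)
  fix F :: "nat set" and A
  assume "finite F" "\<forall>i<n'. a i = (\<Sum>k\<in>F. A k i)"
  then have mem: "(F, A) \<in> {(F :: nat set, A). finite F \<and> (\<forall>i<n. a i = (\<Sum>k\<in>F. A k i))}"
    using assms(2) by auto
  have le: "(\<Sum>k\<in>F. Phin T n (A k)) \<le> (\<Sum>k\<in>F. Phin T n' (A k))"
    using assms by (intro sum_mono Phin_mono)
  show "\<exists>FA'\<in>{(F :: nat set, A). finite F \<and> (\<forall>i<n. a i = (\<Sum>k\<in>F. A k i))}.
      (case FA' of (F, A) \<Rightarrow> \<Sum>k\<in>F. Phin T n (A k)) \<le> (\<Sum>k\<in>F. Phin T n' (A k))"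
    by (rule bexI[where x = "(F, A)"]) (simp_all only: le mem prod.case)
qed

lemma XL_norm_greater_obtain_level:
  fixes z :: "nat \<Rightarrow> nat \<Rightarrow> real"
  assumes "banach_lattice T" "\<And>i. i < m \<Longrightarrow> ereal c < XL_norm T (z i)"
  obtains N where "\<And>i. i < m \<Longrightarrow> ereal c < XLn T N (z i)"
proof -
  have "\<exists>n. ereal c < XLn T n (z i)" if "i < m" for i
    using assms(2)[OF that] by (simp add: XL_norm_def less_SUP_iff)
  then obtain n where n: "\<And>i. i < m \<Longrightarrow> ereal c < XLn T (n i) (z i)"
    by metis
  show ?thesis
  proof
    fix i assume "i < m"
    then have "XLn T (n i) (z i) \<le> XLn T (Max (n ` {..<m})) (z i)"
      using assms(1) by (auto intro!: XLn_mono Max_ge)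
    with n[OF \<open>i < m\<close>] show "ereal c < XLn T (Max (n ` {..<m})) (z i)"
      by order
  qed
qed

lemma sum_INF_less_obtain:
  fixes f :: "'j \<Rightarrow> 'x \<Rightarrow> real"
  assumes "finite F" "(\<Sum>j\<in>F. INF x\<in>B j. ereal (f j x)) < ereal c" "\<And>j x. 0 \<le> f j x"
  obtains x where "\<And>j. j \<in> F \<Longrightarrow> x j \<in> B j" "(\<Sum>j\<in>F. f j (x j)) < c"
proof -
  define g where "g j = (INF x\<in>B j. ereal (f j x))" for j
  have g_nonneg: "0 \<le> g j" for j
    unfolding g_def using assms(3) by (auto intro: INF_greatest)
  have g_real: "g j = ereal (real_of_ereal (g j))" if "j \<in> F" for j
  proof -
    have "g j \<le> (\<Sum>j\<in>F. g j)"
      using sum_mono2[OF assms(1), of "{j}" g] that g_nonneg by simp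
    then have "g j < ereal c"
      using assms(2) unfolding g_def by order
    then show ?thesis
      using g_nonneg[of j] by (cases "g j") auto
  qed
  define \<delta> where "\<delta> = c - (\<Sum>j\<in>F. real_of_ereal (g j))"
  define \<eta> where "\<eta> = \<delta> / (real (card F) + 1)"
  have "ereal (\<Sum>j\<in>F. real_of_ereal (g j)) = (\<Sum>j\<in>F. g j)"
    using g_real by (simp add: sum_ereal[symmetric])
  also have "\<dots> < ereal c"
    using assms(2) by (simp only: g_def)
  finally have "0 < \<delta>"
    by (simp add: \<delta>_def)
  then have \<eta>: "0 < \<eta>" "real (card F) * \<eta> < \<delta>"
    by (simp_all add: \<eta>_def field_simps)
  have "\<exists>x\<in>B j. f j x < real_of_ereal (g j) + \<eta>" if "j \<in> F" for j
  proof -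
    have "g j < ereal (real_of_ereal (g j) + \<eta>)"
      using \<eta>(1) by (subst g_real[OF that]) simp
    then show ?thesis
      by (simp add: g_def INF_less_iff)
  qed
  then obtain x
    where x: "\<And>j. j \<in> F \<Longrightarrow> x j \<in> B j \<and> f j (x j) < real_of_ereal (g j) + \<eta>"
    by metis
  have "(\<Sum>j\<in>F. f j (x j)) \<le> (\<Sum>j\<in>F. real_of_ereal (g j) + \<eta>)"
    using x by (intro sum_mono less_imp_le) auto
  also have "\<dots> < c"
    using \<eta>(2) by (simp add: sum.distrib \<delta>_def)
  finally show ?thesis
    using that x by blast
qed

lemma XLn_less_obtain_decomposition:
  assumes "XLn T N a < ereal c"
  obtains F :: "nat set" and A x where "finite F" "\<And>k. k < N \<Longrightarrow> a k = (\<Sum>j\<in>F. A j k)"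
    "\<And>j. j \<in> F \<Longrightarrow> x j \<in> Bn T N" "(\<Sum>j\<in>F. norm (\<Sum>k<N. A j k *\<^sub>R x j k)) < c"
proof -
  obtain FA where FA: "FA \<in> {(F :: nat set, A). finite F \<and> (\<forall>k<N. a k = (\<Sum>j\<in>F. A j k))}"
    "(case FA of (F, A) \<Rightarrow> \<Sum>j\<in>F. Phin T N (A j)) < ereal c"
    using assms unfolding XLn_def INF_less_iff by blast
  obtain F A where "FA = (F, A)"
    by (rule prod.exhaust)
  with FA have F: "finite F" "\<forall>k<N. a k = (\<Sum>j\<in>F. A j k)"
    and Phi: "(\<Sum>j\<in>F. Phin T N (A j)) < ereal c"
    by auto
  obtain x where "\<And>j. j \<in> F \<Longrightarrow> x j \<in> Bn T N"
    "(\<Sum>j\<in>F. norm (\<Sum>k<N. A j k *\<^sub>R x j k)) < c"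
    using Phi unfolding Phin_def by (rule sum_INF_less_obtain[OF F(1)]) auto
  with F that show thesis
    by blast
qed

lemma XLn_le_sum_restricted:
  fixes F :: "nat set"
  assumes "finite F" "\<And>j. j \<in> F \<Longrightarrow> x j \<in> Bn T N" "S \<subseteq> {..<N}"
    "\<And>k. k < N \<Longrightarrow> b k = (if k \<in> S then \<Sum>j\<in>F. A j k else 0)"
  shows "XLn T N b \<le> ereal (\<Sum>j\<in>F. norm (\<Sum>k\<in>S. A j k *\<^sub>R x j k))"
proof -
  define A' where "A' j k = (if k \<in> S then A j k else 0)" for j k
  have "b k = (\<Sum>j\<in>F. A' j k)" if "k < N" for k
    by (cases "k \<in> S") (simp_all add: A'_def assms(4)[OF that])
  then have "XLn T N b \<le> (\<Sum>j\<in>F. Phin T N (A' j))"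
    unfolding XLn_def using assms(1) by (intro INF_lower2[of "(F, A')"]) auto
  also have "\<dots> \<le> (\<Sum>j\<in>F. ereal (norm (\<Sum>k\<in>S. A j k *\<^sub>R x j k)))"
  proof (rule sum_mono)
    fix j assume "j \<in> F"
    then have "Phin T N (A' j) \<le> ereal (norm (\<Sum>k<N. A' j k *\<^sub>R x j k))"
      unfolding Phin_def by (intro INF_lower assms(2))
    also have "(\<Sum>k<N. A' j k *\<^sub>R x j k) = (\<Sum>k\<in>S. A j k *\<^sub>R x j k)"
      unfolding A'_def using assms(3) by (intro sum.mono_neutral_cong_right) auto
    finally show "Phin T N (A' j) \<le> ereal (norm (\<Sum>k\<in>S. A j k *\<^sub>R x j k))" .
  qed
  finally show ?thesis
    by simp
qed

lemma YU_repr_obtain_disjoint_family: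
  fixes TY :: "'b::{banach, ordered_real_vector, lattice} itself"
  assumes "fin_lattice_repr p (YU_norm TY)" "1 \<le> p" "1 \<le> m"
  obtains v :: "nat \<Rightarrow> 'b" where "pairwise (\<lambda>i j. ldisj (v i) (v j)) {..<m}"
    "\<And>i. i < m \<Longrightarrow> norm (v i) \<le> 2"
    "real m powr real_of_ereal (1 / p) - 1 / 2 \<le> norm (\<Sum>i<m. v i)"
proof -
  obtain z
    where disj: "\<And>i j k. i < m \<Longrightarrow> j < m \<Longrightarrow> i \<noteq> j \<Longrightarrow> z i k = 0 \<or> z j k = 0"
    and unit: "\<And>i. i < m \<Longrightarrow> YU_norm TY (z i) \<le> 2"
    and total: "ereal (real m powr real_of_ereal (1 / p)) \<le> YU_norm TY (\<lambda>k. \<Sum>i<m. z i k)"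
    using fin_lattice_repr_obtain[OF assms] by metis
  define u where "u k = (\<Sum>i<m. z i k)" for k
  have "ereal (real m powr real_of_ereal (1 / p) - 1 / 2) < YU_norm TY u"
    using total unfolding u_def by (rule order.strict_trans2[rotated]) simp
  then obtain N y where y: "y \<in> Bn TY N"
    and big: "real m powr real_of_ereal (1 / p) - 1 / 2 < norm (\<Sum>k<N. u k *\<^sub>R y k)"
    by (rule YU_norm_greater_obtain)
  define v where "v i = (\<Sum>k<N. z i k *\<^sub>R y k)" for i
  define S where "S i = {k. k < N \<and> z i k \<noteq> 0}" for i
  have v_S: "v i = (\<Sum>k\<in>S i. u k *\<^sub>R y k)" if "i < m" for i
    unfolding v_def S_def u_def
    using sum_disjoint_support[where z = z and m = m, OF disj that]
    by (intro sum.mono_neutral_cong_right) auto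
  show thesis
  proof
    show "pairwise (\<lambda>i j. ldisj (v i) (v j)) {..<m}"
    proof (rule pairwiseI)
      fix i j assume ij: "i \<in> {..<m}" "j \<in> {..<m}" "i \<noteq> j"
      then have "ldisj (\<Sum>k\<in>S i. u k *\<^sub>R y k) (\<Sum>k\<in>S j. u k *\<^sub>R y k)"
        using disj by (intro ldisj_sum_sum[OF Bn_pairwise_ldisj[OF y]]) (auto simp: S_def)
      then show "ldisj (v i) (v j)"
        using ij by (simp add: v_S)
    qed
    show "norm (v i) \<le> 2" if "i < m" for i
      using order_trans[OF YU_norm_ge_norm_sum[OF y, of "z i"] unit[OF that]] by (simp add: v_def)
    have "(\<Sum>i<m. v i) = (\<Sum>k<N. u k *\<^sub>R y k)"
      unfolding v_def u_def by (subst sum.swap) (simp add: scaleR_sum_left)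
    then show "real m powr real_of_ereal (1 / p) - 1 / 2 \<le> norm (\<Sum>i<m. v i)"
      using big by simp
  qed
qed

lemma XL_repr_obtain_splitting:
  fixes TX :: "'a::{banach, ordered_real_vector, lattice} itself"
  assumes "banach_lattice TX" "fin_lattice_repr q (XL_norm TX)" "1 \<le> q" "1 \<le> m"
  obtains F :: "nat set" and X :: "nat \<Rightarrow> nat \<Rightarrow> 'a" where "finite F"
    "\<And>j. j \<in> F \<Longrightarrow> pairwise (\<lambda>i i'. ldisj (X j i) (X j i')) {..<m}"
    "\<And>i. i < m \<Longrightarrow> 1 / 2 \<le> (\<Sum>j\<in>F. norm (X j i))"
    "(\<Sum>j\<in>F. norm (\<Sum>i<m. X j i)) \<le> 2 * real m powr real_of_ereal (1 / q) + 1"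
proof -
  let ?Q = "real_of_ereal (1 / q)"
  obtain z
    where disj: "\<And>i j k. i < m \<Longrightarrow> j < m \<Longrightarrow> i \<noteq> j \<Longrightarrow> z i k = 0 \<or> z j k = 0"
    and unit: "\<And>i. i < m \<Longrightarrow> 1 \<le> XL_norm TX (z i)"
    and total: "XL_norm TX (\<lambda>k. \<Sum>i<m. z i k) \<le> ereal (2 * real m powr ?Q)"
    using fin_lattice_repr_obtain[OF assms(2-4)] by metis
  have "ereal (1 / 2) < XL_norm TX (z i)" if "i < m" for i
    using unit[OF that] by (rule order.strict_trans2[rotated]) simp
  then obtain N where level: "\<And>i. i < m \<Longrightarrow> ereal (1 / 2) < XLn TX N (z i)"
    using XL_norm_greater_obtain_level[OF assms(1)] by metis
  define u where "u k = (\<Sum>i<m. z i k)" for k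
  have "XLn TX N u \<le> XL_norm TX u"
    unfolding XL_norm_def by (rule SUP_upper) simp
  also have "\<dots> < ereal (2 * real m powr ?Q + 1)"
    using total unfolding u_def by (rule order.strict_trans1) simp
  finally obtain F :: "nat set" and A x
    where F: "finite F" and u: "\<And>k. k < N \<Longrightarrow> u k = (\<Sum>j\<in>F. A j k)"
    and x: "\<And>j. j \<in> F \<Longrightarrow> x j \<in> Bn TX N"
    and small: "(\<Sum>j\<in>F. norm (\<Sum>k<N. A j k *\<^sub>R x j k)) < 2 * real m powr ?Q + 1"
    by (rule XLn_less_obtain_decomposition) blast
  define S where "S i = {k. k < N \<and> z i k \<noteq> 0}" for i
  define X where "X j i = (\<Sum>k\<in>S i. A j k *\<^sub>R x j k)" for j i
  have S_disj: "S i \<inter> S i' = {}" if "i < m" "i' < m" "i \<noteq> i'" for i i'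
    using disj[OF that] by (auto simp: S_def)
  show thesis
  proof
    show "finite F"
      by (rule F)
    show "pairwise (\<lambda>i i'. ldisj (X j i) (X j i')) {..<m}" if "j \<in> F" for j
      unfolding X_def using S_disj
      by (intro pairwiseI ldisj_sum_sum[OF Bn_pairwise_ldisj[OF x[OF that]]]) (auto simp: S_def)
    show "1 / 2 \<le> (\<Sum>j\<in>F. norm (X j i))" if "i < m" for i
    proof -
      have "z i k = (if k \<in> S i then \<Sum>j\<in>F. A j k else 0)" if "k < N" for k
        using sum_disjoint_support[where z = z and m = m, OF disj \<open>i < m\<close>, of k] u[OF that] that
        by (auto simp: S_def u_def)
      then have "XLn TX N (z i) \<le> ereal (\<Sum>j\<in>F. norm (X j i))"
        unfolding X_def using F x by (intro XLn_le_sum_restricted) (auto simp: S_def)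
      with level[OF that] have "ereal (1 / 2) < ereal (\<Sum>j\<in>F. norm (X j i))"
        by (rule order.strict_trans2)
      then show ?thesis
        by simp
    qed
    have "norm (\<Sum>i<m. X j i) \<le> norm (\<Sum>k<N. A j k *\<^sub>R x j k)" if "j \<in> F" for j
    proof -
      have "(\<Sum>i<m. X j i) = (\<Sum>k\<in>(\<Union>i<m. S i). A j k *\<^sub>R x j k)"
        unfolding X_def using S_disj by (intro sum.UNION_disjoint[symmetric]) (auto simp: S_def)
      also have "norm \<dots> \<le> norm (\<Sum>k<N. A j k *\<^sub>R x j k)"
        by (rule norm_sum_le_subset[OF assms(1) _ _ Bn_pairwise_ldisj[OF x[OF that]]])
          (auto simp: S_def)
      finally show ?thesis .
    qed
    then show "(\<Sum>j\<in>F. norm (\<Sum>i<m. X j i)) \<le> 2 * real m powr ?Q + 1"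
      using small by (meson less_imp_le order_trans sum_mono)
  qed
qed

section \<open>Relative decomposability\<close>

definition decomposition_constant ::
  "'a::{banach, ordered_real_vector, lattice} itself \<Rightarrow> 'b::{banach, ordered_real_vector, lattice} itself
    \<Rightarrow> ereal \<Rightarrow> real \<Rightarrow> bool" where
  "decomposition_constant _ _ s D \<longleftrightarrow> (\<forall>n. \<forall>x::nat \<Rightarrow> 'a. \<forall>y::nat \<Rightarrow> 'b.
     (\<forall>i<n. x i \<noteq> 0) \<and> (\<forall>i<n. y i \<noteq> 0) \<and>
     (\<forall>i<n. \<forall>j<n. i \<noteq> j \<longrightarrow> ldisj (x i) (x j)) \<and>
     (\<forall>i<n. \<forall>j<n. i \<noteq> j \<longrightarrow> ldisj (y i) (y j)) \<longrightarrow>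
     norm (\<Sum>i<n. y i) \<le> D * lnorm s n (\<lambda>i. norm (y i) / norm (x i)) * norm (\<Sum>i<n. x i))"

lemma decomposition_constant_mono:
  fixes TX :: "'a::{banach, ordered_real_vector, lattice} itself"
    and TY :: "'b::{banach, ordered_real_vector, lattice} itself"
  assumes "decomposition_constant TX TY s D" "D \<le> D'"
  shows "decomposition_constant TX TY s D'"
  unfolding decomposition_constant_def
proof (intro allI impI)
  fix n and x :: "nat \<Rightarrow> 'a" and y :: "nat \<Rightarrow> 'b"
  let ?bound = "\<lambda>C. C * lnorm s n (\<lambda>i. norm (y i) / norm (x i)) * norm (\<Sum>i<n. x i)"
  assume "(\<forall>i<n. x i \<noteq> 0) \<and> (\<forall>i<n. y i \<noteq> 0) \<and>
    (\<forall>i<n. \<forall>j<n. i \<noteq> j \<longrightarrow> ldisj (x i) (x j)) \<and>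
    (\<forall>i<n. \<forall>j<n. i \<noteq> j \<longrightarrow> ldisj (y i) (y j))"
  with assms(1) have "norm (\<Sum>i<n. y i) \<le> ?bound D"
    unfolding decomposition_constant_def by blast
  also have "\<dots> \<le> ?bound D'"
    using assms(2) by (intro mult_right_mono) (simp_all add: lnorm_nonneg)
  finally show "norm (\<Sum>i<n. y i) \<le> ?bound D'" .
qed

lemma rel_decomposable_obtain_constant:
  assumes "rel_decomposable TX TY s"
  obtains D where "0 \<le> D" "decomposition_constant TX TY s D"
proof -
  obtain D where "decomposition_constant TX TY s D"
    using assms unfolding rel_decomposable_def decomposition_constant_def by blast
  then have "decomposition_constant TX TY s (max D 0)"
    by (rule decomposition_constant_mono) simp
  then show thesis
    by (rule that[rotated]) simp
qed

lemma decomposition_constant_bound: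
  fixes TX :: "'a::{banach, ordered_real_vector, lattice} itself"
    and TY :: "'b::{banach, ordered_real_vector, lattice} itself"
    and x :: "'i \<Rightarrow> 'a" and y :: "'i \<Rightarrow> 'b"
  assumes "banach_lattice TX" "decomposition_constant TX TY s D" "0 \<le> D" "1 \<le> s" "0 \<le> R"
    "finite I" "pairwise (\<lambda>i j. ldisj (x i) (x j)) I" "pairwise (\<lambda>i j. ldisj (y i) (y j)) I"
    "\<And>i. i \<in> I \<Longrightarrow> norm (y i) \<le> R * norm (x i)"
  shows "norm (\<Sum>i\<in>I. y i) \<le> D * real (card I) powr real_of_ereal (1 / s) * R * norm (\<Sum>i\<in>I. x i)"
proof -
  define J where "J = {i \<in> I. y i \<noteq> 0}"
  have J: "finite J" "J \<subseteq> I"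
    using assms(6) by (auto simp: J_def)
  have x_nz: "x i \<noteq> 0" if "i \<in> J" for i
    using assms(9)[of i] that by (auto simp: J_def)
  obtain g where g: "bij_betw g {..<card J} J"
    using ex_bij_betw_nat_finite[OF J(1)] by (auto simp: atLeast0LessThan)
  have g_in: "g l \<in> J" if "l < card J" for l
    using bij_betwE[OF g] that by blast
  have g_inj: "g l \<noteq> g l'" if "l < card J" "l' < card J" "l \<noteq> l'" for l l'
    using g that by (auto simp: bij_betw_def inj_on_def)
  let ?ratio = "\<lambda>l. norm (y (g l)) / norm (x (g l))" and ?e = "real_of_ereal (1 / s)"
  have main: "norm (\<Sum>l<card J. y (g l)) \<le> D * lnorm s (card J) ?ratio * norm (\<Sum>l<card J. x (g l))"
    using assms(2) unfolding decomposition_constant_def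
  proof (elim allE impE)
    show "(\<forall>l<card J. x (g l) \<noteq> 0) \<and> (\<forall>l<card J. y (g l) \<noteq> 0) \<and>
      (\<forall>l<card J. \<forall>l'<card J. l \<noteq> l' \<longrightarrow> ldisj (x (g l)) (x (g l'))) \<and>
      (\<forall>l<card J. \<forall>l'<card J. l \<noteq> l' \<longrightarrow> ldisj (y (g l)) (y (g l')))"
      using g_in g_inj x_nz J(2) assms(7,8) by (auto simp: J_def pairwise_def)
  qed
  have sum_y: "(\<Sum>l<card J. y (g l)) = (\<Sum>i\<in>I. y i)"
  proof -
    have "(\<Sum>l<card J. y (g l)) = (\<Sum>i\<in>J. y i)"
      by (rule sum.reindex_bij_betw[OF g])
    also have "\<dots> = (\<Sum>i\<in>I. y i)"
      using assms(6) by (intro sum.mono_neutral_left) (auto simp: J_def)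
    finally show ?thesis .
  qed
  have sum_x: "norm (\<Sum>l<card J. x (g l)) \<le> norm (\<Sum>i\<in>I. x i)"
    using norm_sum_le_subset[OF assms(1,6) J(2) assms(7)] by (simp add: sum.reindex_bij_betw[OF g])
  have "lnorm s (card J) ?ratio \<le> real (card J) powr ?e * R"
    using g_in x_nz J(2) assms(9) by (intro lnorm_le_card_powr assms(4,5)) (auto simp: divide_le_eq)
  also have "\<dots> \<le> real (card I) powr ?e * R"
    using J assms(5,6) ereal_inverse_real(2)[OF assms(4)]
    by (intro mult_right_mono powr_mono2) (auto intro: card_mono)
  finally have "lnorm s (card J) ?ratio \<le> real (card I) powr ?e * R" .
  with main sum_x assms(3) show ?thesis
    unfolding sum_y by (smt (verit) lnorm_nonneg mult_mono mult_left_mono norm_ge_zero mult.assoc)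
qed

lemma decomposition_constant_split_bound:
  fixes TX :: "'a::{banach, ordered_real_vector, lattice} itself"
    and TY :: "'b::{banach, ordered_real_vector, lattice} itself"
    and X :: "'j \<Rightarrow> 'i \<Rightarrow> 'a" and v :: "'i \<Rightarrow> 'b"
  assumes "banach_lattice TX" "decomposition_constant TX TY s D" "0 \<le> D" "1 \<le> s" "0 \<le> R"
    "finite F" "finite I" "\<And>j. j \<in> F \<Longrightarrow> pairwise (\<lambda>i i'. ldisj (X j i) (X j i')) I"
    "pairwise (\<lambda>i i'. ldisj (v i) (v i')) I"
    "\<And>i. i \<in> I \<Longrightarrow> norm (v i) \<le> R * (\<Sum>j\<in>F. norm (X j i))"
  shows "norm (\<Sum>i\<in>I. v i)
    \<le> D * real (card I) powr real_of_ereal (1 / s) * R * (\<Sum>j\<in>F. norm (\<Sum>i\<in>I. X j i))"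
proof -
  let ?C = "D * real (card I) powr real_of_ereal (1 / s) * R"
  define w where "w i = (\<Sum>j\<in>F. norm (X j i))" for i
  define t where "t j i = norm (X j i) / w i" for j i
  have w_nonneg: "0 \<le> w i" for i
    by (simp add: w_def sum_nonneg)
  \<comment> \<open>If \<open>w i = 0\<close> then \<open>v i = 0\<close>, and also \<open>t j i = 0\<close> since \<open>x / 0 = 0\<close>.\<close>
  have split: "(\<Sum>j\<in>F. t j i *\<^sub>R v i) = v i" if "i \<in> I" for i
  proof (cases "w i = 0")
    case True
    then show ?thesis
      using assms(10)[OF that] by (simp add: w_def)
  next
    case False
    then have "(\<Sum>j\<in>F. t j i) = 1"
      by (simp add: t_def w_def sum_divide_distrib[symmetric])
    then show ?thesis
      by (simp add: scaleR_sum_left[symmetric])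
  qed
  have piece: "norm (\<Sum>i\<in>I. t j i *\<^sub>R v i) \<le> ?C * norm (\<Sum>i\<in>I. X j i)" if "j \<in> F" for j
  proof (rule decomposition_constant_bound[OF assms(1-5,7) assms(8)[OF that]])
    show "pairwise (\<lambda>i i'. ldisj (t j i *\<^sub>R v i) (t j i' *\<^sub>R v i')) I"
      using assms(9) by (auto simp: pairwise_def intro: ldisj_scaleR)
    show "norm (t j i *\<^sub>R v i) \<le> R * norm (X j i)" if "i \<in> I" for i
    proof (cases "w i = 0")
      case True
      then show ?thesis
        using assms(5) by (simp add: t_def)
    next
      case False
      then have "norm (v i) / w i \<le> R"
        using assms(10)[OF that] w_nonneg[of i] by (simp add: w_def divide_le_eq)
      then have "norm (X j i) * (norm (v i) / w i) \<le> norm (X j i) * R"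
        by (rule mult_left_mono) simp
      then show ?thesis
        by (simp add: t_def mult.commute abs_of_nonneg[OF w_nonneg])
    qed
  qed
  have "(\<Sum>i\<in>I. v i) = (\<Sum>i\<in>I. \<Sum>j\<in>F. t j i *\<^sub>R v i)"
    using split by (intro sum.cong) simp_all
  also have "\<dots> = (\<Sum>j\<in>F. \<Sum>i\<in>I. t j i *\<^sub>R v i)"
    by (rule sum.swap)
  finally have "norm (\<Sum>i\<in>I. v i) \<le> (\<Sum>j\<in>F. norm (\<Sum>i\<in>I. t j i *\<^sub>R v i))"
    by (simp add: norm_sum)
  also have "\<dots> \<le> (\<Sum>j\<in>F. ?C * norm (\<Sum>i\<in>I. X j i))"
    using piece by (rule sum_mono)
  finally show ?thesis
    by (simp add: sum_distrib_left)
qed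

lemma powr_le_const_mult_powr_imp_le:
  fixes P R K :: real
  assumes "0 < K" "\<And>m::nat. 1 \<le> m \<Longrightarrow> real m powr P \<le> K * real m powr R"
  shows "P \<le> R"
proof (rule ccontr)
  assume "\<not> P \<le> R"
  then have d: "0 < P - R"
    by simp
  define m where "m = nat \<lceil>(K + 1) powr (1 / (P - R))\<rceil> + 1"
  have m: "1 \<le> m" "(K + 1) powr (1 / (P - R)) \<le> real m"
    unfolding m_def by linarith+
  then have "((K + 1) powr (1 / (P - R))) powr (P - R) \<le> real m powr (P - R)"
    using d by (intro powr_mono2) auto
  then have "K + 1 \<le> real m powr (P - R)"
    using d assms(1) by (simp add: powr_powr)
  then have "real m powr R * (K + 1) \<le> real m powr R * real m powr (P - R)"
    by (rule mult_left_mono) simp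
  also have "\<dots> = real m powr P"
    by (simp add: powr_add[symmetric])
  also have "\<dots> \<le> K * real m powr R"
    by (rule assms(2)[OF m(1)])
  finally show False
    using m(1) by (simp add: algebra_simps)
qed

lemma repr_exponents_growth_bound:
  fixes TX :: "'a::{banach, ordered_real_vector, lattice} itself"
    and TY :: "'b::{banach, ordered_real_vector, lattice} itself"
  assumes "banach_lattice TX" "decomposition_constant TX TY s D" "0 \<le> D"
    "1 \<le> s" "1 \<le> p" "1 \<le> q" "fin_lattice_repr p (YU_norm TY)" "fin_lattice_repr q (XL_norm TX)"
    "1 \<le> m"
  shows "real m powr real_of_ereal (1 / p)
    \<le> (12 * D + 1) * real m powr (real_of_ereal (1 / q) + real_of_ereal (1 / s))"
proof -
  define P Q S where "P = real_of_ereal (1 / p)" and "Q = real_of_ereal (1 / q)"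
    and "S = real_of_ereal (1 / s)"
  obtain v :: "nat \<Rightarrow> 'b" where v_disj: "pairwise (\<lambda>i j. ldisj (v i) (v j)) {..<m}"
    and v_norm: "\<And>i. i < m \<Longrightarrow> norm (v i) \<le> 2" and v_sum: "real m powr P - 1 / 2 \<le> norm (\<Sum>i<m. v i)"
    using YU_repr_obtain_disjoint_family[OF assms(7,5,9)] unfolding P_def by blast
  obtain F :: "nat set" and X :: "nat \<Rightarrow> nat \<Rightarrow> 'a" where F: "finite F"
    and X_disj: "\<And>j. j \<in> F \<Longrightarrow> pairwise (\<lambda>i i'. ldisj (X j i) (X j i')) {..<m}"
    and X_mass: "\<And>i. i < m \<Longrightarrow> 1 / 2 \<le> (\<Sum>j\<in>F. norm (X j i))"
    and X_sum: "(\<Sum>j\<in>F. norm (\<Sum>i<m. X j i)) \<le> 2 * real m powr Q + 1"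
    using XL_repr_obtain_splitting[OF assms(1,8,6,9)] unfolding Q_def by blast
  have "norm (\<Sum>i<m. v i) \<le> D * real m powr S * 4 * (\<Sum>j\<in>F. norm (\<Sum>i<m. X j i))"
    unfolding S_def using v_norm X_mass
    by (intro decomposition_constant_split_bound[OF assms(1-4) _ F _ X_disj v_disj, simplified])
      fastforce+
  also have "\<dots> \<le> D * real m powr S * 4 * (3 * real m powr Q)"
  proof (rule mult_left_mono)
    have "1 \<le> real m powr Q"
      using assms(9) ereal_inverse_real(2)[OF assms(6)] unfolding Q_def
      by (intro ge_one_powr_ge_zero) simp_all
    then show "(\<Sum>j\<in>F. norm (\<Sum>i<m. X j i)) \<le> 3 * real m powr Q"
      using X_sum by simp
  qed (use assms(3) in simp)
  finally have "real m powr P \<le> 12 * D * real m powr (Q + S) + 1 / 2"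
    using v_sum by (simp add: powr_add algebra_simps)
  moreover have "1 \<le> real m powr (Q + S)"
    using assms(9) ereal_inverse_real(2)[OF assms(6)] ereal_inverse_real(2)[OF assms(4)]
    unfolding Q_def S_def by (intro ge_one_powr_ge_zero) simp_all
  ultimately show ?thesis
    unfolding P_def Q_def S_def by (simp add: algebra_simps)
qed

theorem mainTheorem13:
  fixes TX :: "'a::{banach, ordered_real_vector, lattice} itself"
    and TY :: "'b::{banach, ordered_real_vector, lattice} itself"
    and p q s :: ereal
  assumes "banach_lattice TX" and "banach_lattice TY"
    and "infinite_dimensional TX" and "infinite_dimensional TY"
    and "1 \<le> s" and "1 \<le> p" and "1 \<le> q"
    and "rel_decomposable TX TY s"
    and "fin_lattice_repr p (YU_norm TY)"
    and "fin_lattice_repr q (XL_norm TX)"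
  shows "1 / p \<le> 1 / q + 1 / s"
proof -
  obtain D where D: "0 \<le> D" "decomposition_constant TX TY s D"
    using assms(8) by (rule rel_decomposable_obtain_constant)
  have "real_of_ereal (1 / p) \<le> real_of_ereal (1 / q) + real_of_ereal (1 / s)"
  proof (rule powr_le_const_mult_powr_imp_le)
    show "0 < 12 * D + 1"
      using D(1) by simp
    show "real m powr real_of_ereal (1 / p)
      \<le> (12 * D + 1) * real m powr (real_of_ereal (1 / q) + real_of_ereal (1 / s))"
      if "1 \<le> m" for m :: nat
      by (rule repr_exponents_growth_bound[OF assms(1) D(2,1) assms(5,6,7,9,10) that])
  qed
  then show ?thesis
    using ereal_inverse_real(1)[OF assms(5)] ereal_inverse_real(1)[OF assms(6)]
      ereal_inverse_real(1)[OF assms(7)]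
    by (metis ereal_less_eq(3) plus_ereal.simps(1))
qed

end
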